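(* (1) For every tidy fixpoint formula $\xi=\eta x.\chi$, $\Omega_g(\xi)$ has parity $\eta$. (2) If $\phi,\psi$ are tidy fixpoint formulas with $\phi\sqsubseteq_C\psi$, then $\Omega_g(\phi)\le\Omega_g(\psi)$, and $\Omega_g(\phi)<\Omega_g(\psi)$ if $\phi$ and $\psi$ have different types. (3) For every closure cluster $C$ (of tidy formulas), $\mathit{cd}(C)=\mathit{ind}(C)=|\mathrm{Ran}(\Omega_g\restriction_C)|$, where $\mathit{ind}(C)$ is the maximal $n$ such that there are fixpoint formulas $\phi_1,\dots,\phi_n\in C$ with $\Omega_g(\phi_1)<\cdots<\Omega_g(\phi_n)$ and $\Omega_g(\phi_i),\Omega_g(\phi_{i+1})$ of different parity for all $i<n$.
   Context: Syntax. Formulas of the modal $\mu$-calculus are taken in negation normal form: $\phi ::= \top \mid \bot \mid p \mid \neg p \mid x \mid \phi\land\phi\mid\phi\lor\phi\mid\Diamond\phi\mid\Box\phi\mid\mu x.\phi\mid\nu x.\phi$, where $p$ ranges over proposition letters and $x$ over an infinite supply of variables (which occur only positively). The formulas $\top,\bot,p,\neg p,x$ are atomic. $\mathrm{FV}(\phi)$ and $\mathrm{BV}(\phi)$ are the sets of free and bound variables of $\phi$; $\phi$ is tidy if $\mathrm{FV}(\phi)\cap\mathrm{BV}(\phi)=\varnothing$. A fixpoint formula is one of the form $\eta x.\chi$ with $\eta\in\{\mu,\nu\}$; it has type $\eta$, where $\mu$ counts as odd and $\nu$ as even parity, and $\bar\eta$ denotes the other operator. $\chi[\xi/x]$ is the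 result of replacing every free occurrence of $x$ in $\chi$ by $\xi$; $\xi$ is free for $x$ in $\chi$ if no free variable of $\xi$ becomes bound in $\chi[\xi/x]$. Traces and closure. The trace relation $\rightarrow_C$: $\phi_0\odot\phi_1\rightarrow_C\phi_i$ for $\odot\in\{\land,\lor\}$, $i\in\{0,1\}$; $\heartsuit\phi\rightarrow_C\phi$ for $\heartsuit\in\{\Diamond,\Box\}$; $\eta x.\phi\rightarrow_C\phi[\eta x.\phi/x]$; atomic formulas have no successors. $\twoheadrightarrow_C$ is the reflexive transitive closure of $\rightarrow_C$, $\mathrm{Clos}(\phi)=\{\psi\mid\phi\twoheadrightarrow_C\psi\}$ (a finite set), and a trace is a finite or infinite sequence of formulas with consecutive members related by $\rightarrow_C$. Write $\phi\equiv_C\psi$ iff $\phi\twoheadrightarrow_C\psi$ and $\psi\twoheadrightarrow_C\phi$; its equivalence classes are (closure) clusters, and $C(\phi)$ is the cluster of $\phi$. Free subformulas. $\phi\trianglelefteq_f\psi$ iff $\psi=\chi[\phi/y]$ for some formula $\chi$ and variable $y$ with $y\in\mathrm{FV}(\chi)$ and $\phi$ free for $y$ in $\chi$. Closure order. For a formula $\psi$, write $\rho\twoheadrightarrow_C^{\psi}\sigma$ iff there is a trace $\rho=\chi_0\rightarrow_C\cdots\rightarrow_C\chi_n=\sigma$ ($n\ge0$) with $\psi\trianglelefteq_f\chi_i$ for all $i\le n$. For fixpoint formulas $\phi,\psi$: $\phi\sqsubseteq_C\psi$ iff $\psi\twoheadrightarrow_C^{\psi}\phi$; $\phi\sqsubset_C\psi$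 iff $\phi\sqsubseteq_C\psi$ and $\psi\not\sqsubseteq_C\phi$. Chains. An alternating $\sqsubset_C$-chain of length $n$ is a sequence $\eta_1x_1.\chi_1,\dots,\eta_nx_n.\chi_n$ of tidy fixpoint formulas with $\eta_ix_i.\chi_i\sqsubset_C\eta_{i+1}x_{i+1}.\chi_{i+1}$ and $\eta_{i+1}=\bar\eta_i$ for all $i<n$; it starts at the first and leads up to the last formula. For a tidy fixpoint formula $\xi$, $h^\uparrow(\xi)$ (resp. $h^\downarrow(\xi)$) is the maximal length of an alternating $\sqsubset_C$-chain starting at (resp. leading up to) $\xi$. For a cluster $C$, $\mathit{cd}(C)$ is the maximal length of an alternating $\sqsubset_C$-chain inside $C$. Global priority map. For a tidy fixpoint formula $\psi=\eta y.\phi$ let $d=\mathit{cd}(C(\psi))-h^\uparrow(\psi)$ and set $\Omega_g(\psi)=d$ if $d$ has parity $\eta$ and $\Omega_g(\psi)=d+1$ otherwise; $\Omega_g$ is undefined on non-fixpoint formulas. *)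

theory Defs
  imports Main
begin

datatype fpop = Mu | Nu

datatype 'p fml =
    Top | Bot | Prop 'p | NProp 'p | Var nat
  | And "'p fml" "'p fml" | Or "'p fml" "'p fml"
  | Dia "'p fml" | Box "'p fml"
  | Fix fpop nat "'p fml"

fun FV :: "'p fml \<Rightarrow> nat set" where
  "FV (Var x) = {x}"
| "FV (And a b) = FV a \<union> FV b"
| "FV (Or a b) = FV a \<union> FV b"
| "FV (Dia a) = FV a"
| "FV (Box a) = FV a"
| "FV (Fix e x a) = FV a - {x}"
| "FV _ = {}"

fun BV :: "'p fml \<Rightarrow> nat set" where
  "BV (And a b) = BV a \<union> BV b"
| "BV (Or a b) = BV a \<union> BV b"
| "BV (Dia a) = BV a"
| "BV (Box a) = BV a"
| "BV (Fix e x a) = insert x (BV a)"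
| "BV _ = {}"

definition tidy :: "'p fml \<Rightarrow> bool" where
  "tidy \<phi> \<longleftrightarrow> FV \<phi> \<inter> BV \<phi> = {}"

fun is_fix :: "'p fml \<Rightarrow> bool" where
  "is_fix (Fix e x a) = True"
| "is_fix _ = False"

fun fptype :: "'p fml \<Rightarrow> fpop" where
  "fptype (Fix e x a) = e"
| "fptype _ = Mu"  (* irrelevant on non-fixpoint formulas *)

definition has_parity :: "int \<Rightarrow> fpop \<Rightarrow> bool" where
  "has_parity d e \<longleftrightarrow> (if e = Mu then odd d else even d)"

text \<open>subst chi xi x  =  chi[xi/x]: replace every free occurrence of x in chi by xi.\<close>
fun subst :: "'p fml \<Rightarrow> 'p fml \<Rightarrow> nat \<Rightarrow> 'p fml" where
  "subst (Var y) \<xi> x = (if y = x then \<xi> else Var y)"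
| "subst (And a b) \<xi> x = And (subst a \<xi> x) (subst b \<xi> x)"
| "subst (Or a b) \<xi> x = Or (subst a \<xi> x) (subst b \<xi> x)"
| "subst (Dia a) \<xi> x = Dia (subst a \<xi> x)"
| "subst (Box a) \<xi> x = Box (subst a \<xi> x)"
| "subst (Fix e y a) \<xi> x = (if y = x then Fix e y a else Fix e y (subst a \<xi> x))"
| "subst a \<xi> x = a"

text \<open>free_for xi x chi: no free variable of xi becomes bound in chi[xi/x].\<close>
fun free_for :: "'p fml \<Rightarrow> nat \<Rightarrow> 'p fml \<Rightarrow> bool" where
  "free_for \<xi> x (And a b) = (free_for \<xi> x a \<and> free_for \<xi> x b)"
| "free_for \<xi> x (Or a b) = (free_for \<xi> x a \<and> free_for \<xi> x b)"
| "free_for \<xi> x (Dia a) = free_for \<xi> x a"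
| "free_for \<xi> x (Box a) = free_for \<xi> x a"
| "free_for \<xi> x (Fix e y a) =
     (x \<notin> FV (Fix e y a) \<or> (y \<notin> FV \<xi> \<and> free_for \<xi> x a))"
| "free_for \<xi> x _ = True"

inductive step :: "'p fml \<Rightarrow> 'p fml \<Rightarrow> bool" where
  and_l: "step (And a b) a"
| and_r: "step (And a b) b"
| or_l: "step (Or a b) a"
| or_r: "step (Or a b) b"
| dia: "step (Dia a) a"
| box: "step (Box a) a"
| unfold: "step (Fix e x a) (subst a (Fix e x a) x)"

abbreviation steps :: "'p fml \<Rightarrow> 'p fml \<Rightarrow> bool" where
  "steps \<equiv> step\<^sup>*\<^sup>*"

definition Clos :: "'p fml \<Rightarrow> 'p fml set" where
  "Clos \<phi> = {\<psi>. steps \<phi> \<psi>}"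

definition cluster :: "'p fml \<Rightarrow> 'p fml set" where
  "cluster \<phi> = {\<psi>. steps \<phi> \<psi> \<and> steps \<psi> \<phi>}"

definition free_sub :: "'p fml \<Rightarrow> 'p fml \<Rightarrow> bool" where
  "free_sub \<phi> \<psi> \<longleftrightarrow> (\<exists>\<chi> y. \<psi> = subst \<chi> \<phi> y \<and> y \<in> FV \<chi> \<and> free_for \<phi> y \<chi>)"

definition steps_in :: "'p fml \<Rightarrow> 'p fml \<Rightarrow> 'p fml \<Rightarrow> bool" where
  "steps_in \<psi> \<rho> \<sigma> \<longleftrightarrow> free_sub \<psi> \<rho> \<and>
     (\<lambda>a b. step a b \<and> free_sub \<psi> a \<and> free_sub \<psi> b)\<^sup>*\<^sup>* \<rho> \<sigma>"

definition cle :: "'p fml \<Rightarrow> 'p fml \<Rightarrow> bool" where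
  "cle \<phi> \<psi> \<longleftrightarrow> is_fix \<phi> \<and> is_fix \<psi> \<and> steps_in \<psi> \<psi> \<phi>"

definition clt :: "'p fml \<Rightarrow> 'p fml \<Rightarrow> bool" where
  "clt \<phi> \<psi> \<longleftrightarrow> cle \<phi> \<psi> \<and> \<not> cle \<psi> \<phi>"

definition alt_chain :: "'p fml list \<Rightarrow> bool" where
  "alt_chain cs \<longleftrightarrow> (\<forall>\<phi> \<in> set cs. tidy \<phi> \<and> is_fix \<phi>) \<and>
     (\<forall>i. Suc i < length cs \<longrightarrow> clt (cs ! i) (cs ! Suc i)
                               \<and> fptype (cs ! Suc i) \<noteq> fptype (cs ! i))"

definition h_up :: "'p fml \<Rightarrow> nat" where
  "h_up \<xi> = Max {length cs | cs. alt_chain cs \<and> cs \<noteq> [] \<and> hd cs = \<xi>}"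

definition h_down :: "'p fml \<Rightarrow> nat" where
  "h_down \<xi> = Max {length cs | cs. alt_chain cs \<and> cs \<noteq> [] \<and> last cs = \<xi>}"

definition cd :: "'p fml set \<Rightarrow> nat" where
  "cd C = Max {length cs | cs. alt_chain cs \<and> set cs \<subseteq> C}"

definition Omega_g :: "'p fml \<Rightarrow> int" where
  "Omega_g \<psi> = (let d = int (cd (cluster \<psi>)) - int (h_up \<psi>)
                 in if has_parity d (fptype \<psi>) then d else d + 1)"

definition ind :: "'p fml set \<Rightarrow> nat" where
  "ind C = Max {length fs | fs. (\<forall>\<phi> \<in> set fs. \<phi> \<in> C \<and> is_fix \<phi>) \<and>
     (\<forall>i. Suc i < length fs \<longrightarrow> Omega_g (fs ! i) < Omega_g (fs ! Suc i)
          \<and> odd (Omega_g (fs ! i)) \<noteq> odd (Omega_g (fs ! Suc i)))}"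

end

theory Submission
  imports Defs
begin

(*
  The closure order only relates a formula to its own subformulas: cle phi psi makes psi a
  free subformula of phi, so cle is antisymmetric and strict steps decrease the size.
  Prepending phi to a longest alternating chain starting at psi (or to its tail, when phi and
  psi have the same type) shows that h_up is antitone along cle, strictly so when the type
  changes. As cle-related formulas share their cluster, Omega_g, which is cd - h_up rounded up
  to the parity of the type, is monotone; this gives (1) and (2).

  For (3), Omega_g maps an alternating chain to a strictly increasing sequence of alternating
  parities, and such sequences are injective, so cd <= ind <= |Ran Omega_g|. Conversely, a
  fixpoint formula tau of minimal size in a cluster of tidy formulas is a subformula of every
  member of the cluster, hence lies cle-above all its fixpoint formulas. Then h_up tau = 1,
  all priorities lie between 0 and Omega_g tau, which is cd - 1 or cd, and in the latter case
  the priority 0 is not attained. Finiteness of the closure of a tidy formula makes all the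
  maxima involved well defined.
*)

lemma finite_FV: "finite (FV a)"
  by (induction a) auto

lemma finite_BV: "finite (BV a)"
  by (induction a) auto

lemma subst_nonfree: "x \<notin> FV a \<Longrightarrow> subst a s x = a"
  by (induction a) auto

lemma BV_subst: "BV (subst a s x) \<subseteq> BV a \<union> BV s"
  by (induction a) auto

lemma step_BV: "step a b \<Longrightarrow> BV b \<subseteq> BV a"
  by (induction rule: step.induct) (use BV_subst in fastforce)+

lemma steps_BV: "steps a b \<Longrightarrow> BV b \<subseteq> BV a"
  by (induction rule: rtranclp_induct) (use step_BV in blast)+

lemma step_Fix_iff: "step (Fix e x a) r \<longleftrightarrow> r = subst a (Fix e x a) x"
  by (auto elim: step.cases intro: step.unfold)

fun subformulas :: "'p fml \<Rightarrow> 'p fml set" where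
  "subformulas (And a b) = insert (And a b) (subformulas a \<union> subformulas b)"
| "subformulas (Or a b) = insert (Or a b) (subformulas a \<union> subformulas b)"
| "subformulas (Dia a) = insert (Dia a) (subformulas a)"
| "subformulas (Box a) = insert (Box a) (subformulas a)"
| "subformulas (Fix e x a) = insert (Fix e x a) (subformulas a)"
| "subformulas a = {a}"

lemma subformulas_refl [simp]: "a \<in> subformulas a"
  by (cases a) auto

lemma subformulas_trans: "a \<in> subformulas b \<Longrightarrow> b \<in> subformulas c \<Longrightarrow> a \<in> subformulas c"
  by (induction c) auto

lemma size_subformula: "t \<in> subformulas r \<Longrightarrow> t = r \<or> size t < size r"
  by (induction r) auto

lemma subformulas_antisym: "a \<in> subformulas b \<Longrightarrow> b \<in> subformulas a \<Longrightarrow> a = b"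
  using size_subformula[of a b] size_subformula[of b a] by auto

lemma subformula_subst: "x \<in> FV a \<Longrightarrow> s \<in> subformulas (subst a s x)"
  by (induction a) auto

lemma size_subst: "z \<in> FV a \<Longrightarrow> a = Var z \<or> size s < size (subst a s z)"
  by (induction a) (auto split: if_splits)

lemma subst_eq_or_size_less: "a \<noteq> Var z \<Longrightarrow> subst a s z = a \<or> size s < size (subst a s z)"
  using size_subst subst_nonfree by metis

lemma subformulas_subst:
  "t \<in> subformulas (subst a s z) \<Longrightarrow> t \<in> subformulas s \<or> t \<in> subformulas a \<or> size s < size t"
proof (induction a)
  case (Var y)
  then show ?case by (auto split: if_splits)
next
  case (And a b)
  then have "t = subst (And a b) s z \<or> t \<in> subformulas (subst a s z) \<or> t \<in> subformulas (subst b s z)"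
    by simp
  then show ?case using And.IH subst_eq_or_size_less[of "And a b" z s] by (auto simp del: subst.simps)
next
  case (Or a b)
  then have "t = subst (Or a b) s z \<or> t \<in> subformulas (subst a s z) \<or> t \<in> subformulas (subst b s z)"
    by simp
  then show ?case using Or.IH subst_eq_or_size_less[of "Or a b" z s] by (auto simp del: subst.simps)
next
  case (Dia a)
  then have "t = subst (Dia a) s z \<or> t \<in> subformulas (subst a s z)"
    by simp
  then show ?case using Dia.IH subst_eq_or_size_less[of "Dia a" z s] by (auto simp del: subst.simps)
next
  case (Box a)
  then have "t = subst (Box a) s z \<or> t \<in> subformulas (subst a s z)"
    by simp
  then show ?case using Box.IH subst_eq_or_size_less[of "Box a" z s] by (auto simp del: subst.simps)
next
  case (Fix e w a)
  then have "t = subst (Fix e w a) s z \<or> t \<in> subformulas a \<or> t \<in> subformulas (subst a s z)"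
    by (auto split: if_splits)
  then show ?case using Fix.IH subst_eq_or_size_less[of "Fix e w a" z s] by (auto simp del: subst.simps)
qed auto

(* For a fresh y this context exhibits t as a free subformula of r. *)
fun abstract :: "'p fml \<Rightarrow> 'p fml \<Rightarrow> nat \<Rightarrow> 'p fml" where
  "abstract (And a b) t y = (if And a b = t then Var y else And (abstract a t y) (abstract b t y))"
| "abstract (Or a b) t y = (if Or a b = t then Var y else Or (abstract a t y) (abstract b t y))"
| "abstract (Dia a) t y = (if Dia a = t then Var y else Dia (abstract a t y))"
| "abstract (Box a) t y = (if Box a = t then Var y else Box (abstract a t y))"
| "abstract (Fix e x a) t y = (if Fix e x a = t then Var y else Fix e x (abstract a t y))"
| "abstract r t y = (if r = t then Var y else r)"

lemma subst_abstract: "y \<notin> FV r \<union> BV r \<Longrightarrow> subst (abstract r t y) t y = r"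
  by (induction r) auto

lemma FV_abstract: "t \<in> subformulas r \<Longrightarrow> y \<notin> BV r \<Longrightarrow> y \<in> FV (abstract r t y)"
  by (induction r) auto

lemma free_for_abstract: "BV r \<inter> FV t = {} \<Longrightarrow> free_for t y (abstract r t y)"
  by (induction r) auto

lemma free_sub_if_subformula:
  assumes "t \<in> subformulas r" "BV r \<inter> FV t = {}"
  shows "free_sub t r"
proof -
  obtain y where "y \<notin> FV r \<union> BV r"
    using finite_FV finite_BV ex_new_if_finite[OF infinite_UNIV_nat] by (metis finite_Un)
  then have "r = subst (abstract r t y) t y" "y \<in> FV (abstract r t y)"
    "free_for t y (abstract r t y)"
    using assms by (simp_all add: subst_abstract FV_abstract free_for_abstract)
  then show ?thesis
    unfolding free_sub_def by blast
qed

lemma subformula_if_free_sub: "free_sub t r \<Longrightarrow> t \<in> subformulas r"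
  unfolding free_sub_def using subformula_subst by blast

fun substs :: "'p fml \<Rightarrow> ('p fml \<times> nat) list \<Rightarrow> 'p fml" where
  "substs a [] = a"
| "substs a ((s, x) # L) = substs (subst a s x) L"

lemma substs_append: "substs a (L @ M) = substs (substs a L) M"
  by (induction L arbitrary: a) auto

lemma substs_nonfree: "\<forall>p\<in>set L. snd p \<notin> FV t \<Longrightarrow> substs t L = t"
  by (induction L) (auto simp: subst_nonfree)

lemma substs_simps:
  "substs (And a b) L = And (substs a L) (substs b L)"
  "substs (Or a b) L = Or (substs a L) (substs b L)"
  "substs (Dia a) L = Dia (substs a L)"
  "substs (Box a) L = Box (substs a L)"
  "substs (Fix e w a) L = Fix e w (substs a (filter (\<lambda>p. snd p \<noteq> w) L))"
  by (induction L arbitrary: a b) auto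

(* L lists the binders of c already unfolded on the way down to the current subformula. *)
lemma steps_substs:
  "t \<in> subformulas c \<Longrightarrow> BV c \<inter> FV t = {} \<Longrightarrow> \<forall>p\<in>set L. snd p \<notin> FV t \<Longrightarrow>
   steps (substs c L) t"
proof (induction c arbitrary: L)
  case (Fix e x a)
  show ?case
  proof (cases "t = Fix e x a")
    case False
    define L' where "L' = filter (\<lambda>p. snd p \<noteq> x) L"
    define F where "F = Fix e x (substs a L')"
    have "steps (substs a (L' @ [(F, x)])) t"
      using Fix False by (intro Fix.IH) (auto simp: L'_def)
    moreover have "step F (substs a (L' @ [(F, x)]))"
      unfolding F_def substs_append by (simp add: step.unfold)
    ultimately show ?thesis
      by (simp add: substs_simps flip: L'_def F_def)
  qed (use Fix in \<open>simp add: substs_nonfree\<close>)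
qed (auto simp: substs_simps substs_nonfree intro: converse_rtranclp_into_rtranclp step.intros)

lemma steps_to_subformula: "t \<in> subformulas c \<Longrightarrow> BV c \<inter> FV t = {} \<Longrightarrow> steps c t"
  using steps_substs[of t c "[]"] by simp

section \<open>Finiteness of the closure\<close>

fun msubst :: "'p fml \<Rightarrow> (nat \<Rightarrow> 'p fml) \<Rightarrow> 'p fml" where
  "msubst (Var y) \<sigma> = \<sigma> y"
| "msubst (And a b) \<sigma> = And (msubst a \<sigma>) (msubst b \<sigma>)"
| "msubst (Or a b) \<sigma> = Or (msubst a \<sigma>) (msubst b \<sigma>)"
| "msubst (Dia a) \<sigma> = Dia (msubst a \<sigma>)"
| "msubst (Box a) \<sigma> = Box (msubst a \<sigma>)"
| "msubst (Fix e x a) \<sigma> = Fix e x (msubst a (\<sigma>(x := Var x)))"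
| "msubst a \<sigma> = a"

(* FL a sigma over-approximates the closure of msubst a sigma; below a binder x of a,
   sigma maps x to the unfolded fixpoint. *)
fun FL :: "'p fml \<Rightarrow> (nat \<Rightarrow> 'p fml) \<Rightarrow> 'p fml set" where
  "FL (And a b) \<sigma> = insert (msubst (And a b) \<sigma>) (FL a \<sigma> \<union> FL b \<sigma>)"
| "FL (Or a b) \<sigma> = insert (msubst (Or a b) \<sigma>) (FL a \<sigma> \<union> FL b \<sigma>)"
| "FL (Dia a) \<sigma> = insert (msubst (Dia a) \<sigma>) (FL a \<sigma>)"
| "FL (Box a) \<sigma> = insert (msubst (Box a) \<sigma>) (FL a \<sigma>)"
| "FL (Fix e x a) \<sigma> = insert (msubst (Fix e x a) \<sigma>) (FL a (\<sigma>(x := msubst (Fix e x a) \<sigma>)))"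
| "FL a \<sigma> = {msubst a \<sigma>}"

lemma finite_FL: "finite (FL a \<sigma>)"
  by (induction a arbitrary: \<sigma>) auto

lemma msubst_in_FL: "msubst a \<sigma> \<in> FL a \<sigma>"
  by (cases a) auto

lemma msubst_Var: "msubst a Var = a"
proof (induction a)
  case (Fix e x a)
  have "Var(x := Var x) = Var" by auto
  then show ?case using Fix by simp
qed auto

lemma FV_msubst: "FV (msubst a \<sigma>) \<subseteq> (\<Union>y\<in>FV a. FV (\<sigma> y))"
proof (induction a arbitrary: \<sigma>)
  case (Fix e x c)
  then show ?case by (fastforce split: if_splits)
qed fastforce+

lemma subst_msubst:
  "\<tau> x = Var x \<Longrightarrow> (\<forall>y\<in>FV a. y \<noteq> x \<longrightarrow> x \<notin> FV (\<tau> y)) \<Longrightarrow>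
   subst (msubst a \<tau>) R x = msubst a (\<tau>(x := R))"
proof (induction a arbitrary: \<tau>)
  case (Var y)
  then show ?case by (auto simp: subst_nonfree)
next
  case (Fix e w c)
  show ?case
  proof (cases "w = x")
    case True
    have "\<tau>(x := R, x := Var x) = \<tau>" "\<tau>(x := Var x) = \<tau>"
      using Fix.prems(1) by auto
    then show ?thesis using True by (simp only: msubst.simps subst.simps) simp
  next
    case False
    have "subst (msubst c (\<tau>(w := Var w))) R x = msubst c (\<tau>(w := Var w, x := R))"
      using Fix False by (intro Fix.IH) auto
    moreover have "\<tau>(w := Var w, x := R) = \<tau>(x := R, w := Var w)"
      using False by (rule fun_upd_twist)
    ultimately show ?thesis using False by (simp only: msubst.simps subst.simps) simp
  qed
qed auto

lemma step_msubst_Fix: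
  assumes "x \<notin> V" "\<forall>y\<in>FV (Fix e x c). (\<sigma> y = Var y \<and> y \<in> V) \<or> FV (\<sigma> y) \<subseteq> V"
    and "step (msubst (Fix e x c) \<sigma>) r"
  shows "r = msubst c (\<sigma>(x := msubst (Fix e x c) \<sigma>))"
proof -
  have "r = subst (msubst c (\<sigma>(x := Var x))) (msubst (Fix e x c) \<sigma>) x"
    using assms(3) by (simp add: step_Fix_iff)
  also have "\<dots> = msubst c (\<sigma>(x := Var x, x := msubst (Fix e x c) \<sigma>))"
  proof (rule subst_msubst)
    show "\<forall>y\<in>FV c. y \<noteq> x \<longrightarrow> x \<notin> FV ((\<sigma>(x := Var x)) y)"
    proof (intro ballI impI)
      fix y assume "y \<in> FV c" "y \<noteq> x"
      then have "(\<sigma> y = Var y \<and> y \<in> V) \<or> FV (\<sigma> y) \<subseteq> V" using assms(2) by simp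
      then show "x \<notin> FV ((\<sigma>(x := Var x)) y)" using \<open>y \<noteq> x\<close> assms(1) by auto
    qed
  qed simp
  finally show ?thesis by simp
qed

(* V holds the free variables of the root formula: sigma fixes those and maps every other
   variable to a formula whose free variables lie in V, so no capture occurs in BV a. *)
lemma step_FL:
  "BV a \<inter> V = {} \<Longrightarrow> \<forall>y\<in>FV a. (\<sigma> y = Var y \<and> y \<in> V) \<or> FV (\<sigma> y) \<subseteq> V \<Longrightarrow>
   r \<in> FL a \<sigma> \<Longrightarrow> step r r' \<Longrightarrow> r' \<in> FL a \<sigma> \<or> (\<exists>y\<in>FV a. r = \<sigma> y)"
proof (induction a arbitrary: \<sigma> r)
  case (Fix e x c)
  define \<sigma>' where "\<sigma>' = \<sigma>(x := msubst (Fix e x c) \<sigma>)"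
  have "FV (msubst (Fix e x c) \<sigma>) \<subseteq> V"
    using FV_msubst[of "Fix e x c" \<sigma>] Fix.prems(2) by fastforce
  then have "\<forall>y\<in>FV c. (\<sigma>' y = Var y \<and> y \<in> V) \<or> FV (\<sigma>' y) \<subseteq> V"
    using Fix.prems(2) by (auto simp: \<sigma>'_def)
  then have IH: "r' \<in> FL c \<sigma>' \<or> (\<exists>y\<in>FV c. r = \<sigma>' y)" if "r \<in> FL c \<sigma>'"
    using Fix.IH[of \<sigma>' r] Fix.prems(1,4) that by auto
  show ?case
  proof (cases "r = msubst (Fix e x c) \<sigma>")
    case True
    then have "r' = msubst c \<sigma>'"
      using step_msubst_Fix[of x V e c \<sigma> r'] Fix.prems by (simp add: \<sigma>'_def)
    then show ?thesis using msubst_in_FL[of c \<sigma>'] by (simp add: \<sigma>'_def)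
  next
    case False
    then show ?thesis using IH Fix.prems(3) by (auto simp: \<sigma>'_def split: if_splits)
  qed
next
  case (And a b)
  consider "r = msubst (And a b) \<sigma>" | "r \<in> FL a \<sigma>" | "r \<in> FL b \<sigma>"
    using And.prems(3) by auto
  then show ?case
  proof cases
    case 1
    then show ?thesis using And.prems(4) msubst_in_FL[of a \<sigma>] msubst_in_FL[of b \<sigma>]
      by (auto elim: step.cases)
  next
    case 2
    then show ?thesis using And.IH(1)[of \<sigma> r] And.prems by auto
  next
    case 3
    then show ?thesis using And.IH(2)[of \<sigma> r] And.prems by auto
  qed
next
  case (Or a b)
  consider "r = msubst (Or a b) \<sigma>" | "r \<in> FL a \<sigma>" | "r \<in> FL b \<sigma>"
    using Or.prems(3) by auto
  then show ?case
  proof cases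
    case 1
    then show ?thesis using Or.prems(4) msubst_in_FL[of a \<sigma>] msubst_in_FL[of b \<sigma>]
      by (auto elim: step.cases)
  next
    case 2
    then show ?thesis using Or.IH(1)[of \<sigma> r] Or.prems by auto
  next
    case 3
    then show ?thesis using Or.IH(2)[of \<sigma> r] Or.prems by auto
  qed
qed (auto elim: step.cases simp: msubst_in_FL)

lemma steps_in_FL: assumes "tidy \<phi>" "steps \<phi> r" shows "r \<in> FL \<phi> Var"
  using assms(2)
proof (induction rule: rtranclp_induct)
  case base
  then show ?case using msubst_in_FL[of \<phi> Var] by (simp add: msubst_Var)
next
  case (step r r')
  have "r' \<in> FL \<phi> Var \<or> (\<exists>y\<in>FV \<phi>. r = Var y)"
    using step assms(1) by (intro step_FL[where V = "FV \<phi>"]) (auto simp: tidy_def)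
  then show ?case using step.hyps(2) by (auto elim: step.cases)
qed

lemma finite_Clos: "tidy \<phi> \<Longrightarrow> finite (Clos \<phi>)"
  unfolding Clos_def using steps_in_FL finite_FL by (metis finite_subset mem_Collect_eq subsetI)

section \<open>The closure order\<close>

abbreviation free_step :: "'p fml \<Rightarrow> 'p fml \<Rightarrow> 'p fml \<Rightarrow> bool" where
  "free_step \<psi> \<equiv> (\<lambda>a b. step a b \<and> free_sub \<psi> a \<and> free_sub \<psi> b)"

lemma free_steps_imp_steps: "(free_step \<psi>)\<^sup>*\<^sup>* a b \<Longrightarrow> steps a b"
  by (induction rule: rtranclp_induct) auto

lemma free_steps_free_sub: "(free_step \<psi>)\<^sup>*\<^sup>* a b \<Longrightarrow> free_sub \<psi> a \<Longrightarrow> free_sub \<psi> b"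
  by (induction rule: rtranclp_induct) auto

lemma free_sub_if_reachable:
  assumes "tidy c" "steps c x" "c \<in> subformulas x" shows "free_sub c x"
proof -
  have "BV x \<subseteq> BV c" using steps_BV assms(2) by blast
  then show ?thesis using assms unfolding tidy_def by (intro free_sub_if_subformula) blast+
qed

lemma cle_imp_steps: "cle a b \<Longrightarrow> steps b a"
  unfolding cle_def steps_in_def using free_steps_imp_steps by blast

lemma cle_imp_subformula: "cle a b \<Longrightarrow> b \<in> subformulas a"
  unfolding cle_def steps_in_def using free_steps_free_sub subformula_if_free_sub by blast

lemma cle_imp_steps_back: "cle a b \<Longrightarrow> tidy b \<Longrightarrow> steps a b"
  using cle_imp_steps[THEN steps_BV] cle_imp_subformula steps_to_subformula
  unfolding tidy_def by blast

lemma free_steps_mono: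
  assumes "(free_step b)\<^sup>*\<^sup>* b a" "steps c b" "c \<in> subformulas b" "tidy c"
  shows "(free_step c)\<^sup>*\<^sup>* b a"
  using assms(1)
proof (induction rule: rtranclp_induct)
  case (step y z)
  have "steps c y" "steps c z"
    using assms(2) free_steps_imp_steps[OF step.hyps(1)] step.hyps(2) by auto
  moreover have "c \<in> subformulas y" "c \<in> subformulas z"
    using assms(3) step.hyps(2) subformula_if_free_sub subformulas_trans by blast+
  ultimately show ?case
    using step free_sub_if_reachable[OF assms(4)] by (simp add: rtranclp.rtrancl_into_rtrancl)
qed simp

lemma cle_trans: "cle a b \<Longrightarrow> cle b c \<Longrightarrow> tidy c \<Longrightarrow> cle a c"
proof -
  assume ab: "cle a b" and bc: "cle b c" and "tidy c"
  have "(free_step c)\<^sup>*\<^sup>* b a"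
    using ab free_steps_mono cle_imp_steps[OF bc] cle_imp_subformula[OF bc] \<open>tidy c\<close>
    unfolding cle_def steps_in_def by blast
  then show ?thesis using ab bc unfolding cle_def steps_in_def by auto
qed

lemma cle_antisym: "cle a b \<Longrightarrow> cle b a \<Longrightarrow> a = b"
  using cle_imp_subformula subformulas_antisym by blast

lemma clt_size: "clt a b \<Longrightarrow> size b < size a"
  using cle_imp_subformula[of a b] size_subformula unfolding clt_def by blast

lemma cle_if_type_differs: "cle a b \<Longrightarrow> fptype a \<noteq> fptype b \<Longrightarrow> clt a b"
  using cle_antisym unfolding clt_def by blast

lemma cluster_eq: "steps a b \<Longrightarrow> steps b a \<Longrightarrow> cluster a = cluster b"
  unfolding cluster_def by (auto intro: rtranclp_trans)

lemma in_cluster_self: "a \<in> cluster a"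
  unfolding cluster_def by simp

lemma cluster_eq_if_mem: "a \<in> cluster b \<Longrightarrow> cluster a = cluster b"
  unfolding cluster_def by (auto intro: cluster_eq rtranclp_trans)

lemma steps_in_cluster: "\<rho> \<in> cluster \<phi> \<Longrightarrow> \<tau> \<in> cluster \<phi> \<Longrightarrow> steps \<rho> \<tau>"
  unfolding cluster_def by (auto intro: rtranclp_trans)

lemma in_cluster_if_between:
  "steps a b \<Longrightarrow> steps b c \<Longrightarrow> a \<in> cluster \<phi> \<Longrightarrow> c \<in> cluster \<phi> \<Longrightarrow> b \<in> cluster \<phi>"
  unfolding cluster_def by (auto intro: rtranclp_trans)

lemma cle_cluster_eq: "cle a b \<Longrightarrow> tidy b \<Longrightarrow> cluster a = cluster b"
  using cluster_eq cle_imp_steps cle_imp_steps_back by metis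

lemma finite_cluster: "tidy \<phi> \<Longrightarrow> finite (cluster \<phi>)"
  using finite_Clos unfolding Clos_def cluster_def by (rule finite_subset[rotated]) auto

lemma alt_chain_Nil: "alt_chain []"
  unfolding alt_chain_def by simp

lemma alt_chain_Cons:
  "alt_chain (a # cs) \<longleftrightarrow> tidy a \<and> is_fix a \<and> alt_chain cs \<and>
     (cs \<noteq> [] \<longrightarrow> clt a (hd cs) \<and> fptype (hd cs) \<noteq> fptype a)"
  unfolding alt_chain_def by (cases cs) (auto simp: nth_Cons split: nat.splits)

lemma alt_chain_snoc:
  "alt_chain (cs @ [t]) \<longleftrightarrow> alt_chain cs \<and> tidy t \<and> is_fix t \<and>
     (cs \<noteq> [] \<longrightarrow> clt (last cs) t \<and> fptype t \<noteq> fptype (last cs))"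
  by (induction cs) (auto simp: alt_chain_Cons alt_chain_Nil)

lemma alt_chain_sizes: "alt_chain cs \<Longrightarrow> sorted_wrt (<) (rev (map size cs))"
  by (auto simp: sorted_wrt_rev sorted_wrt_map sorted_wrt_iff_nth_Suc_transp transp_def
      alt_chain_def intro: clt_size)

lemma alt_chain_distinct: "alt_chain cs \<Longrightarrow> distinct cs"
  using alt_chain_sizes[of cs] by (simp add: strict_sorted_iff distinct_map)

lemma length_alt_chain: "alt_chain cs \<Longrightarrow> cs \<noteq> [] \<Longrightarrow> length cs \<le> Suc (size (hd cs))"
  using sorted_wrt_less_idx[OF alt_chain_sizes, of cs "length cs - 1"]
  by (simp add: rev_nth hd_conv_nth)

lemma alt_chain_in_cluster: "alt_chain cs \<Longrightarrow> cs \<noteq> [] \<Longrightarrow> set cs \<subseteq> cluster (hd cs)"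
proof (induction cs)
  case (Cons a cs)
  show ?case
  proof (cases "cs = []")
    case False
    with Cons.prems have "alt_chain cs" "cle a (hd cs)"
      by (auto simp: alt_chain_Cons clt_def)
    moreover from \<open>alt_chain cs\<close> False have "tidy (hd cs)"
      by (simp add: alt_chain_def)
    ultimately show ?thesis using Cons.IH False cle_cluster_eq[of a "hd cs"] in_cluster_self[of a]
      by auto
  qed (simp add: in_cluster_self)
qed simp

lemma finite_alt_chain_lengths: "finite {length cs | cs. alt_chain cs \<and> cs \<noteq> [] \<and> hd cs = \<xi>}"
  by (rule finite_subset[of _ "{..Suc (size \<xi>)}"]) (auto dest: length_alt_chain)

lemma h_up_ge: "alt_chain cs \<Longrightarrow> cs \<noteq> [] \<Longrightarrow> length cs \<le> h_up (hd cs)"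
  unfolding h_up_def using finite_alt_chain_lengths by (intro Max_ge) auto

lemma h_up_pos: "tidy \<xi> \<Longrightarrow> is_fix \<xi> \<Longrightarrow> 1 \<le> h_up \<xi>"
  using h_up_ge[of "[\<xi>]"] by (simp add: alt_chain_Cons alt_chain_Nil)

lemma h_up_attained:
  assumes "tidy \<xi>" "is_fix \<xi>"
  obtains cs where "alt_chain cs" "cs \<noteq> []" "hd cs = \<xi>" "length cs = h_up \<xi>"
proof -
  have "h_up \<xi> \<in> {length cs | cs. alt_chain cs \<and> cs \<noteq> [] \<and> hd cs = \<xi>}"
    unfolding h_up_def using finite_alt_chain_lengths
  proof (rule Max_in)
    show "{length cs | cs. alt_chain cs \<and> cs \<noteq> [] \<and> hd cs = \<xi>} \<noteq> {}"
      using assms by (auto simp: alt_chain_Cons alt_chain_Nil intro!: exI[of _ "[\<xi>]"])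
  qed
  then show ?thesis using that by auto
qed

lemma cle_clt_trans: "cle a b \<Longrightarrow> clt b c \<Longrightarrow> tidy b \<Longrightarrow> tidy c \<Longrightarrow> clt a c"
  unfolding clt_def using cle_trans by blast

lemma h_up_antimono:
  assumes "tidy \<phi>" "tidy \<psi>" "cle \<phi> \<psi>"
  shows "h_up \<psi> \<le> h_up \<phi> \<and> (fptype \<phi> \<noteq> fptype \<psi> \<longrightarrow> h_up \<psi> < h_up \<phi>)"
proof -
  have isfix: "is_fix \<phi>" "is_fix \<psi>" using assms(3) by (simp_all add: cle_def)
  obtain cs where cs: "alt_chain (\<psi> # cs)" "length (\<psi> # cs) = h_up \<psi>"
    using h_up_attained[OF assms(2) isfix(2)] by (metis list.collapse)
  show ?thesis
  proof (cases "fptype \<phi> = fptype \<psi>")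
    case False
    then have "alt_chain (\<phi> # \<psi> # cs)"
      using cs assms cle_if_type_differs isfix by (simp add: alt_chain_Cons)
    then show ?thesis using h_up_ge[of "\<phi> # \<psi> # cs"] cs(2) by simp
  next
    case same: True
    show ?thesis
    proof (cases cs)
      case Nil
      then show ?thesis using h_up_pos[OF assms(1) isfix(1)] cs(2) same by simp
    next
      case (Cons \<chi> cs')
      then have "alt_chain (\<phi> # cs)"
        using cs(1) assms same isfix cle_clt_trans[OF assms(3)] by (auto simp: alt_chain_Cons)
      then show ?thesis using h_up_ge[of "\<phi> # cs"] cs(2) Cons same by simp
    qed
  qed
qed

definition parity_round :: "int \<Rightarrow> fpop \<Rightarrow> int" where
  "parity_round d e = (if has_parity d e then d else d + 1)"

lemma Omega_g_parity_round:
  "Omega_g \<psi> = parity_round (int (cd (cluster \<psi>)) - int (h_up \<psi>)) (fptype \<psi>)"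
  unfolding Omega_g_def parity_round_def Let_def by simp

lemma has_parity_parity_round: "has_parity (parity_round d e) e"
  unfolding parity_round_def has_parity_def by auto

lemma parity_round_bounds: "d \<le> parity_round d e" "parity_round d e \<le> d + 1"
  unfolding parity_round_def by auto

lemma has_parity_unique: "has_parity d e1 \<Longrightarrow> has_parity d e2 \<Longrightarrow> e1 = e2"
  unfolding has_parity_def by (cases e1; cases e2) auto

lemma has_parity_odd_iff:
  "has_parity a e1 \<Longrightarrow> has_parity b e2 \<Longrightarrow> odd a = odd b \<longleftrightarrow> e1 = e2"
  unfolding has_parity_def by (cases e1; cases e2) auto

lemma parity_round_mono: "d1 \<le> d2 \<Longrightarrow> parity_round d1 e \<le> parity_round d2 e"
  unfolding parity_round_def has_parity_def by (cases "d1 = d2") auto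

lemma parity_round_strict_mono:
  assumes "e1 \<noteq> e2" "d1 < d2"
  shows "parity_round d1 e1 < parity_round d2 e2"
proof -
  have "parity_round d1 e1 \<le> parity_round d2 e2"
    using parity_round_bounds[of d1 e1] parity_round_bounds[of d2 e2] assms(2) by linarith
  moreover have "parity_round d1 e1 \<noteq> parity_round d2 e2"
    using has_parity_parity_round has_parity_unique assms(1) by metis
  ultimately show ?thesis by simp
qed

lemma has_parity_Omega_g: "has_parity (Omega_g \<xi>) (fptype \<xi>)"
  unfolding Omega_g_parity_round by (rule has_parity_parity_round)

lemma Omega_g_mono:
  assumes "tidy \<phi>" "tidy \<psi>" "cle \<phi> \<psi>"
  shows "Omega_g \<phi> \<le> Omega_g \<psi> \<and> (fptype \<phi> \<noteq> fptype \<psi> \<longrightarrow> Omega_g \<phi> < Omega_g \<psi>)"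
proof -
  define n where "n = int (cd (cluster \<psi>))"
  have "Omega_g \<phi> = parity_round (n - int (h_up \<phi>)) (fptype \<phi>)"
    using cle_cluster_eq[OF assms(3,2)] by (simp add: Omega_g_parity_round n_def)
  moreover have "Omega_g \<psi> = parity_round (n - int (h_up \<psi>)) (fptype \<psi>)"
    by (simp add: Omega_g_parity_round n_def)
  ultimately show ?thesis
    using h_up_antimono[OF assms] parity_round_mono parity_round_strict_mono
    by (cases "fptype \<phi> = fptype \<psi>") (auto intro: less_imp_le)
qed

section \<open>Cluster depth, index and the range of the priority map\<close>

lemma finite_alt_chain_lengths_in:
  assumes "finite C"
  shows "finite {length cs | cs. alt_chain cs \<and> set cs \<subseteq> C}"
proof (rule finite_subset[of _ "{..card C}"])
  show "{length cs | cs. alt_chain cs \<and> set cs \<subseteq> C} \<subseteq> {..card C}"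
  proof clarify
    fix cs assume "alt_chain cs" "set cs \<subseteq> C"
    then show "length cs \<le> card C"
      using alt_chain_distinct distinct_card card_mono[OF assms] by metis
  qed
qed simp

lemma cd_ge: "finite C \<Longrightarrow> alt_chain cs \<Longrightarrow> set cs \<subseteq> C \<Longrightarrow> length cs \<le> cd C"
  unfolding cd_def using finite_alt_chain_lengths_in by (intro Max_ge) auto

lemma cd_attained:
  assumes "finite C"
  obtains cs where "alt_chain cs" "set cs \<subseteq> C" "length cs = cd C"
proof -
  have "cd C \<in> {length cs | cs. alt_chain cs \<and> set cs \<subseteq> C}"
    unfolding cd_def using finite_alt_chain_lengths_in[OF assms] alt_chain_Nil
    by (intro Max_in) auto
  then show ?thesis using that by auto
qed

lemma h_up_le_cd:
  assumes "tidy \<xi>" "is_fix \<xi>"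
  shows "h_up \<xi> \<le> cd (cluster \<xi>)"
proof -
  obtain cs where "alt_chain cs" "cs \<noteq> []" "hd cs = \<xi>" "length cs = h_up \<xi>"
    using h_up_attained[OF assms] .
  then show ?thesis
    using alt_chain_in_cluster cd_ge[OF finite_cluster[OF assms(1)]] by metis
qed

lemma Omega_g_nonneg: "tidy \<xi> \<Longrightarrow> is_fix \<xi> \<Longrightarrow> 0 \<le> Omega_g \<xi>"
  using h_up_le_cd[of \<xi>] parity_round_bounds(1)
    [of "int (cd (cluster \<xi>)) - int (h_up \<xi>)" "fptype \<xi>"]
  unfolding Omega_g_parity_round by linarith

lemma Omega_g_eq_0:
  assumes "tidy \<xi>" "is_fix \<xi>" "Omega_g \<xi> = 0"
  shows "h_up \<xi> = cd (cluster \<xi>)" "has_parity 0 (fptype \<xi>)"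
proof -
  define d where "d = int (cd (cluster \<xi>)) - int (h_up \<xi>)"
  have "0 \<le> d" using h_up_le_cd[OF assms(1,2)] by (simp add: d_def)
  moreover have round: "parity_round d (fptype \<xi>) = 0"
    using assms(3) by (simp add: Omega_g_parity_round d_def)
  ultimately have "d = 0" using parity_round_bounds(1)[of d "fptype \<xi>"] by simp
  then show "h_up \<xi> = cd (cluster \<xi>)" "has_parity 0 (fptype \<xi>)"
    using d_def round has_parity_parity_round[of d "fptype \<xi>"] by auto
qed

lemma alt_chain_nth_parity:
  "alt_chain cs \<Longrightarrow> i < length cs \<Longrightarrow> has_parity d (fptype (cs ! 0)) \<Longrightarrow>
   has_parity (d + int i) (fptype (cs ! i))"
proof (induction i)
  case (Suc i)
  then have "has_parity (d + int i) (fptype (cs ! i))" "fptype (cs ! Suc i) \<noteq> fptype (cs ! i)"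
    by (auto simp: alt_chain_def)
  then show ?case
    unfolding has_parity_def by (cases "fptype (cs ! Suc i)"; cases "fptype (cs ! i)") auto
qed simp

definition priority_alternating :: "'p fml set \<Rightarrow> 'p fml list \<Rightarrow> bool" where
  "priority_alternating C fs \<longleftrightarrow> (\<forall>\<phi> \<in> set fs. \<phi> \<in> C \<and> is_fix \<phi>) \<and>
     (\<forall>i. Suc i < length fs \<longrightarrow> Omega_g (fs ! i) < Omega_g (fs ! Suc i)
          \<and> odd (Omega_g (fs ! i)) \<noteq> odd (Omega_g (fs ! Suc i)))"

lemma ind_priority_alternating: "ind C = Max {length fs | fs. priority_alternating C fs}"
  unfolding ind_def priority_alternating_def ..

lemma length_priority_alternating:
  assumes "finite C" "priority_alternating C fs"
  shows "length fs \<le> card (Omega_g ` {\<psi> \<in> C. is_fix \<psi>})"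
proof -
  have "sorted_wrt (<) (map Omega_g fs)"
    using assms(2) unfolding priority_alternating_def
    by (subst sorted_wrt_iff_nth_Suc_transp) (auto simp: transp_def)
  then have "distinct (map Omega_g fs)"
    by (simp add: strict_sorted_iff)
  then have "length fs = card (Omega_g ` set fs)"
    using distinct_card by fastforce
  also have "\<dots> \<le> card (Omega_g ` {\<psi> \<in> C. is_fix \<psi>})"
    using assms unfolding priority_alternating_def by (intro card_mono) auto
  finally show ?thesis .
qed

lemma finite_priority_alternating_lengths:
  "finite C \<Longrightarrow> finite {length fs | fs. priority_alternating C fs}"
  by (rule finite_subset[of _ "{..card (Omega_g ` {\<psi> \<in> C. is_fix \<psi>})}"])
    (auto dest: length_priority_alternating)

lemma ind_ge: "finite C \<Longrightarrow> priority_alternating C fs \<Longrightarrow> length fs \<le> ind C"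
  unfolding ind_priority_alternating by (intro Max_ge finite_priority_alternating_lengths) auto

lemma ind_le_card: "finite C \<Longrightarrow> ind C \<le> card (Omega_g ` {\<psi> \<in> C. is_fix \<psi>})"
proof -
  assume "finite C"
  moreover have "priority_alternating C []"
    by (simp add: priority_alternating_def)
  ultimately have "ind C \<in> {length fs | fs. priority_alternating C fs}"
    unfolding ind_priority_alternating
    by (intro Max_in finite_priority_alternating_lengths) auto
  with \<open>finite C\<close> show ?thesis using length_priority_alternating by auto
qed

lemma priority_alternating_if_alt_chain:
  assumes "alt_chain cs" "set cs \<subseteq> C"
  shows "priority_alternating C cs"
  unfolding priority_alternating_def
proof (intro conjI allI impI)
  show "\<forall>\<phi>\<in>set cs. \<phi> \<in> C \<and> is_fix \<phi>" using assms unfolding alt_chain_def by auto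
next
  fix i assume i: "Suc i < length cs"
  then have types: "fptype (cs ! Suc i) \<noteq> fptype (cs ! i)"
    using assms(1) unfolding alt_chain_def by auto
  have "clt (cs ! i) (cs ! Suc i)" "tidy (cs ! i)" "tidy (cs ! Suc i)"
    using i assms(1) unfolding alt_chain_def by auto
  then show "Omega_g (cs ! i) < Omega_g (cs ! Suc i)"
    using Omega_g_mono[of "cs ! i" "cs ! Suc i"] types unfolding clt_def by auto
  show "odd (Omega_g (cs ! i)) \<noteq> odd (Omega_g (cs ! Suc i))"
    using has_parity_odd_iff[OF has_parity_Omega_g has_parity_Omega_g, of "cs ! i" "cs ! Suc i"]
      types by auto
qed

lemma cd_le_ind:
  assumes "finite C"
  shows "cd C \<le> ind C"
proof -
  obtain cs where "alt_chain cs" "set cs \<subseteq> C" "length cs = cd C"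
    using cd_attained[OF assms] .
  then show ?thesis
    using ind_ge[OF assms] priority_alternating_if_alt_chain by metis
qed

(* Unfolding rho = eta x. a only creates subformulas containing rho, and these are larger
   than tau by minimality; so tau already occurs in rho. *)
lemma minimal_fixpoint_subformula:
  assumes "\<tau> \<in> cluster \<phi>" "\<And>\<xi>. \<xi> \<in> cluster \<phi> \<Longrightarrow> is_fix \<xi> \<Longrightarrow> size \<tau> \<le> size \<xi>"
    and "\<rho> \<in> cluster \<phi>"
  shows "\<tau> \<in> subformulas \<rho>"
proof -
  have "steps \<rho> \<tau>" using assms(3,1) by (rule steps_in_cluster)
  then show ?thesis using assms(3)
  proof (induction rule: converse_rtranclp_induct)
    case (step \<rho> \<rho>')
    have "\<rho>' \<in> cluster \<phi>"
      using step assms(1) in_cluster_if_between by blast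
    with step.IH have sub: "\<tau> \<in> subformulas \<rho>'" .
    from step.hyps(1) show ?case
    proof cases
      case (unfold e x a)
      then have "\<not> size \<rho> < size \<tau>" using assms(2) step.prems by force
      then show ?thesis using subformulas_subst[of \<tau> a \<rho> x] sub unfold by auto
    qed (use sub in auto)
  qed simp
qed

lemma free_steps_in_cluster:
  assumes "tidy \<tau>" "\<forall>\<rho>\<in>cluster \<tau>. \<tau> \<in> subformulas \<rho>" "\<xi> \<in> cluster \<tau>"
  shows "(free_step \<tau>)\<^sup>*\<^sup>* \<tau> \<xi>"
proof -
  have "steps \<tau> \<xi>" using assms(3) unfolding cluster_def by simp
  then show ?thesis using assms(3)
  proof (induction rule: rtranclp_induct)
    case (step y z)
    then have "y \<in> cluster \<tau>"
      using in_cluster_if_between in_cluster_self by blast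
    moreover have "steps \<tau> z" using step.hyps by simp
    ultimately have "free_sub \<tau> y" "free_sub \<tau> z"
      using free_sub_if_reachable[OF assms(1)] assms(2) step by auto
    moreover have "(free_step \<tau>)\<^sup>*\<^sup>* \<tau> y" using step.IH \<open>y \<in> cluster \<tau>\<close> .
    ultimately show ?case
      using step.hyps(2) by (simp add: rtranclp.rtrancl_into_rtrancl)
  qed simp
qed

definition cluster_top :: "'p fml \<Rightarrow> bool" where
  "cluster_top \<tau> \<longleftrightarrow> is_fix \<tau> \<and> (\<forall>\<xi>\<in>cluster \<tau>. is_fix \<xi> \<longrightarrow> cle \<xi> \<tau>)"

lemma cluster_top_exists:
  assumes "\<forall>\<psi>\<in>cluster \<phi>. tidy \<psi>" "\<xi>\<^sub>0 \<in> cluster \<phi>" "is_fix \<xi>\<^sub>0"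
  obtains \<tau> where "\<tau> \<in> cluster \<phi>" "cluster_top \<tau>"
proof -
  obtain \<tau> where \<tau>: "\<tau> \<in> cluster \<phi>" "is_fix \<tau>"
    and min: "\<And>\<xi>. \<xi> \<in> cluster \<phi> \<Longrightarrow> is_fix \<xi> \<Longrightarrow> size \<tau> \<le> size \<xi>"
    using ex_has_least_nat[of "\<lambda>\<xi>. \<xi> \<in> cluster \<phi> \<and> is_fix \<xi>" \<xi>\<^sub>0 size] assms(2,3) by blast
  have C: "cluster \<tau> = cluster \<phi>" using cluster_eq_if_mem[OF \<tau>(1)] .
  have "cle \<xi> \<tau>" if "\<xi> \<in> cluster \<phi>" "is_fix \<xi>" for \<xi>
  proof -
    have "(free_step \<tau>)\<^sup>*\<^sup>* \<tau> \<xi>"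
      using assms(1) \<tau>(1) minimal_fixpoint_subformula[OF \<tau>(1) min] that C
      by (intro free_steps_in_cluster) auto
    moreover have "free_sub \<tau> \<tau>"
      using assms(1) \<tau>(1) by (intro free_sub_if_reachable) auto
    ultimately show ?thesis
      unfolding cle_def steps_in_def using that \<tau> by simp
  qed
  then show ?thesis using that \<tau> C by (simp add: cluster_top_def)
qed

lemma h_up_cluster_top:
  assumes "tidy \<tau>" "cluster_top \<tau>"
  shows "h_up \<tau> = 1"
proof -
  obtain cs where cs: "alt_chain (\<tau> # cs)" "length (\<tau> # cs) = h_up \<tau>"
    using h_up_attained[OF assms(1)] assms(2) unfolding cluster_top_def by (metis list.collapse)
  have "cs = []"
  proof (rule ccontr)
    assume "cs \<noteq> []"
    then have "clt \<tau> (hd cs)" "alt_chain cs" "hd cs \<in> cluster \<tau>"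
      using cs(1) alt_chain_in_cluster[OF cs(1)] by (auto simp: alt_chain_Cons)
    moreover from \<open>alt_chain cs\<close> \<open>cs \<noteq> []\<close> have "is_fix (hd cs)"
      by (simp add: alt_chain_def)
    ultimately show False using assms(2) unfolding clt_def cluster_top_def by blast
  qed
  then show ?thesis using cs(2) by simp
qed

(* A formula of priority 0 starts an alternating chain of length cd whose last member has
   the parity of cd - 1, unlike tau; appending tau would give a chain of length cd + 1. *)
lemma Omega_g_nonzero_below_top:
  assumes "tidy \<tau>" "cluster_top \<tau>" "\<not> has_parity (int (cd (cluster \<tau>)) - 1) (fptype \<tau>)"
    and "\<xi> \<in> cluster \<tau>" "tidy \<xi>" "is_fix \<xi>"
  shows "Omega_g \<xi> \<noteq> 0"
proof
  assume "Omega_g \<xi> = 0"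
  define n where "n = cd (cluster \<tau>)"
  have C: "cluster \<xi> = cluster \<tau>" using cluster_eq_if_mem[OF assms(4)] .
  have "h_up \<xi> = n" "has_parity 0 (fptype \<xi>)"
    using Omega_g_eq_0[OF assms(5,6) \<open>Omega_g \<xi> = 0\<close>] C by (simp_all add: n_def)
  moreover obtain cs where cs: "alt_chain cs" "cs \<noteq> []" "hd cs = \<xi>" "length cs = h_up \<xi>"
    using h_up_attained[OF assms(5,6)] .
  moreover have "0 < n" using cs(2,4) \<open>h_up \<xi> = n\<close> by (metis length_greater_0_conv)
  ultimately have "has_parity (int n - 1) (fptype (last cs))"
    using alt_chain_nth_parity[OF cs(1), of "n - 1" 0]
    by (simp add: hd_conv_nth last_conv_nth of_nat_diff Suc_leI)
  then have types: "fptype \<tau> \<noteq> fptype (last cs)"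
    using assms(3) by (auto simp: n_def)
  have csC: "set cs \<subseteq> cluster \<tau>" using alt_chain_in_cluster[OF cs(1,2)] cs(3) C by simp
  then have "cle (last cs) \<tau>"
    using assms(2) cs(1,2) last_in_set by (fastforce simp: alt_chain_def cluster_top_def)
  then have "alt_chain (cs @ [\<tau>])"
    using cs(1) assms(1,2) types cle_if_type_differs[of "last cs" \<tau>]
    by (simp add: alt_chain_snoc cluster_top_def)
  then have "length (cs @ [\<tau>]) \<le> n"
    unfolding n_def using csC in_cluster_self[of \<tau>] by (intro cd_ge finite_cluster assms(1)) auto
  then show False using cs(4) \<open>h_up \<xi> = n\<close> by simp
qed

lemma card_priorities_le_cd:
  assumes "\<forall>\<xi>\<in>cluster \<tau>. tidy \<xi>" "cluster_top \<tau>"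
  shows "card (Omega_g ` {\<xi> \<in> cluster \<tau>. is_fix \<xi>}) \<le> cd (cluster \<tau>)"
proof -
  define n where "n = cd (cluster \<tau>)"
  have "tidy \<tau>" using assms(1) in_cluster_self by blast
  have Omega_\<tau>: "Omega_g \<tau> = parity_round (int n - 1) (fptype \<tau>)"
    using h_up_cluster_top[OF \<open>tidy \<tau>\<close> assms(2)] by (simp add: Omega_g_parity_round n_def)
  have bounds: "0 \<le> Omega_g \<xi> \<and> Omega_g \<xi> \<le> Omega_g \<tau>" if "\<xi> \<in> cluster \<tau>" "is_fix \<xi>" for \<xi>
    using that assms Omega_g_nonneg Omega_g_mono[of \<xi> \<tau>] \<open>tidy \<tau>\<close>
    unfolding cluster_top_def by blast
  show ?thesis
  proof (cases "has_parity (int n - 1) (fptype \<tau>)")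
    case True
    then have "Omega_g ` {\<xi> \<in> cluster \<tau>. is_fix \<xi>} \<subseteq> {0..int n - 1}"
      using bounds Omega_\<tau> by (auto simp: parity_round_def)
    then have "card (Omega_g ` {\<xi> \<in> cluster \<tau>. is_fix \<xi>}) \<le> card {0..int n - 1}"
      by (intro card_mono) auto
    then show ?thesis by (simp add: n_def)
  next
    case False
    then have "Omega_g ` {\<xi> \<in> cluster \<tau>. is_fix \<xi>} \<subseteq> {1..int n}"
    proof clarify
      fix \<xi> assume "\<xi> \<in> cluster \<tau>" "is_fix \<xi>"
      moreover have "Omega_g \<tau> = int n" using False Omega_\<tau> by (simp add: parity_round_def)
      ultimately show "Omega_g \<xi> \<in> {1..int n}"
        using bounds Omega_g_nonzero_below_top[OF \<open>tidy \<tau>\<close> assms(2)] False assms(1)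
        by (force simp: n_def)
    qed
    then have "card (Omega_g ` {\<xi> \<in> cluster \<tau>. is_fix \<xi>}) \<le> card {1..int n}"
      by (intro card_mono) auto
    then show ?thesis by (simp add: n_def)
  qed
qed

lemma cluster_cd_ind_card:
  assumes "\<forall>\<psi>\<in>cluster \<phi>. tidy \<psi>"
  shows "cd (cluster \<phi>) = ind (cluster \<phi>) \<and>
    ind (cluster \<phi>) = card (Omega_g ` {\<psi> \<in> cluster \<phi>. is_fix \<psi>})"
proof -
  have "finite (cluster \<phi>)" using assms in_cluster_self finite_cluster by blast
  moreover have "card (Omega_g ` {\<psi> \<in> cluster \<phi>. is_fix \<psi>}) \<le> cd (cluster \<phi>)"
  proof (cases "\<exists>\<xi>\<in>cluster \<phi>. is_fix \<xi>")
    case True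
    then obtain \<tau> where \<tau>: "\<tau> \<in> cluster \<phi>" "cluster_top \<tau>"
      using cluster_top_exists[OF assms] by blast
    then show ?thesis
      using card_priorities_le_cd[of \<tau>] assms cluster_eq_if_mem[OF \<tau>(1)] by simp
  next
    case False
    then have "{\<psi> \<in> cluster \<phi>. is_fix \<psi>} = {}" by auto
    then show ?thesis by (metis card.empty image_empty le0)
  qed
  ultimately show ?thesis
    using cd_le_ind[of "cluster \<phi>"] ind_le_card[of "cluster \<phi>"] by linarith
qed

theorem mainTheorem4:
  shows "(\<forall>(\<xi>::'p fml). tidy \<xi> \<and> is_fix \<xi> \<longrightarrow> has_parity (Omega_g \<xi>) (fptype \<xi>))
   \<and> (\<forall>(\<phi>::'p fml) \<psi>. tidy \<phi> \<and> is_fix \<phi> \<and> tidy \<psi> \<and> is_fix \<psi> \<and> cle \<phi> \<psi> \<longrightarrow>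
            Omega_g \<phi> \<le> Omega_g \<psi> \<and>
            (fptype \<phi> \<noteq> fptype \<psi> \<longrightarrow> Omega_g \<phi> < Omega_g \<psi>))
   \<and> (\<forall>(\<phi>::'p fml). (\<forall>\<psi> \<in> cluster \<phi>. tidy \<psi>) \<longrightarrow>
            cd (cluster \<phi>) = ind (cluster \<phi>) \<and>
            ind (cluster \<phi>) = card (Omega_g ` {\<psi> \<in> cluster \<phi>. is_fix \<psi>}))"
  using has_parity_Omega_g Omega_g_mono cluster_cd_ind_card by blast

end
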